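(* For any simplicial model $\mathcal{C}=(\mathcal{V},C,\chi,\ell)$, $\mathtt{LEM}(\mathcal{C})$ is a proper local epistemic model such that for every facet $F\in\mathcal{F}(C)$ and every sentence $\alpha$, $\mathcal{C},F\Vdash\alpha$ iff $\mathtt{LEM}(\mathcal{C}),F\vDash\alpha$. For any local epistemic model $\mathcal{M}=(W,\delta,\{R_a\}_{a\in\mathbf{A}},\rho)$, $\mathtt{SC}(\mathcal{M})$ is a simplicial model whose set of facets is $\{F^{\mathcal M}_w\mid w\in W\}$, and for every $w\in W$ and every sentence $\alpha$, $\mathcal{M},w\vDash\alpha$ iff $\mathtt{SC}(\mathcal{M}),F^{\mathcal M}_w\Vdash\alpha$.
   Context: Fix a nonempty finite set $\mathbf{A}$ of agents, a countable set $\mathbf{X}$ of variables disjoint from $\mathbf{A}$, and a countable set $\mathbf{P}$ of predicate letters. Formulas of $\mathcal{L}$: $\phi ::= p_x \mid \top \mid \neg\phi \mid (\phi\wedge\phi) \mid [x:=a]\phi \mid \mathsf{K}_X\alpha$ ($p\in\mathbf{P}$, $x\in\mathbf{X}$, $a\in\mathbf{A}$, $X\subseteq\mathbf{X}$ finite possibly empty, $\alpha$ without free variables), with $FV(p_x)=\{x\}$, $FV(\top)=\emptyset$, $FV$ of $\neg,\wedge$ as usual, $FV([x:=a]\phi)=FV(\phi)\setminus\{x\}$, $FV(\mathsf{K}_X\alpha)=X$; sentences have no free variables. A simplicial model is $\mathcal{C}=(\mathcal{V},C,\chi,\ell)$: $\mathcal{V}\neq\emptyset$; $C\subseteq\wp(\mathcal{V})$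 with $\emptyset\notin C$, closed under nonempty subsets, containing all singletons; $\chi:\mathcal{V}\to\mathbf{A}$ injective on every member of $C$; $\ell:\mathbf{P}\to\wp(\mathcal{V})$; facets $\mathcal{F}(C)$ are the inclusion-maximal members of $C$. A first-order Kripke model is $\mathcal{M}=(W,\delta,\{R_a\}_{a\in\mathbf{A}},\rho)$: $W\neq\emptyset$, $\delta:W\to\wp(\mathbf{A})\setminus\{\emptyset\}$, $R_a\subseteq W\times W$ with $R_a(w)=\emptyset$ if $a\notin\delta(w)$, $\rho:\mathbf{P}\times W\to\wp(\mathbf{A})$ with $\rho(p,w)\subseteq\delta(w)$. Semantics, with assignments $\sigma:\mathbf{X}\to\mathbf{A}$ admissible ($\sigma[FV(\phi)]\subseteq\chi[F]$, resp. $\subseteq\delta(w)$), Booleans standard: $\mathcal{C},F,\sigma\Vdash p_x$ iff $\sigma(x)\in\chi[F\cap\ell(p)]$; $\mathcal{C},F,\sigma\Vdash[x:=a]\phi$ iff ($a\in\chi[F]$ implies $\mathcal{C},F,\sigma[x\mapsto a]\Vdash\phi$); $\mathcal{C},F,\sigma\Vdash\mathsf{K}_X\alpha$ iff $\mathcal{C},G,\sigma\Vdash\alpha$ for all $G\in\mathcal{F}(C)$ with $\sigma[X]\subseteq\chi[F\cap G]$. $\mathcal{M},w,\sigma\vDash p_x$ iff $\sigma(x)\in\rho(p,w)$; $\mathcal{M},w,\sigma\vDash[x:=a]\phi$ iff ($a\in\delta(w)$ implies $\mathcal{M},w,\sigma[x\mapsto a]\vDash\phi$); $\mathcal{M},w,\sigma\vDash\mathsf{K}_X\alpha$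 iff $\mathcal{M},v,\sigma\vDash\alpha$ for all $v\in\bigcap_{a\in\sigma[X]}R_a(w)$ (empty intersection $=W$). Truth of sentences does not depend on the assignment. $\mathcal{M}$ is a local epistemic model if: for each $a$ the restriction of $R_a$ to $\{w\mid a\in\delta(w)\}$ is an equivalence relation; $wR_av$ and $a\in\delta(w)$ imply $a\in\delta(v)$; $wR_av$ and $a\in\rho(p,w)$ imply $a\in\rho(p,v)$; $v\in\bigcap_{a\in\delta(w)}R_a(w)$ implies $\delta(v)\subseteq\delta(w)$. It is proper if additionally $\bigcap_{a\in\delta(w)}R_a(w)=\{w\}$ for all $w$. $\mathtt{LEM}(\mathcal{C})=(W^{\mathcal C},\delta^{\mathcal C},\{R^{\mathcal C}_a\},\rho^{\mathcal C})$ where $W^{\mathcal C}=\mathcal{F}(C)$, $\delta^{\mathcal C}(F)=\chi[F]$, $R^{\mathcal C}_a=\{(F,G)\mid a\in\chi[F\cap G]\}$, $\rho^{\mathcal C}(p,F)=\chi[F\cap\ell(p)]$. For a local epistemic model $\mathcal{M}$, let $[w]_a=R_a(w)$ and $F^{\mathcal M}_w=\{(a,[w]_a)\mid a\in\delta(w)\}$; $\mathtt{SC}(\mathcal{M})=(\mathcal{V}^{\mathcal M},C^{\mathcal M},\chi^{\mathcal M},\ell^{\mathcal M})$ where $\mathcal{V}^{\mathcal M}=\{(a,[w]_a)\mid w\in W, a\in\delta(w)\}$, $C^{\mathcal M}=\{X\subseteq\mathcal{V}^{\mathcal M}\mid X\neq\emptyset, X\subseteq F^{\mathcal M}_w\text{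 for some }w\in W\}$, $\chi^{\mathcal M}(a,[w]_a)=a$, and $\ell^{\mathcal M}(p)=\{(a,[w]_a)\mid a\in\rho(p,w)\}$. *)

theory Defs
  imports Main "HOL-Library.Countable"
begin

text \<open>Formulas over predicate letters 'p, variables 'x and agents 'a.
  The index set of K is an 'x set; well-formedness (finiteness of X and
  closedness of the argument of K) is imposed by wf_form.\<close>

datatype ('p, 'x, 'a) form =
    Pred 'p 'x
  | Top
  | Neg "('p, 'x, 'a) form"
  | Conj "('p, 'x, 'a) form" "('p, 'x, 'a) form"
  | Assign 'x 'a "('p, 'x, 'a) form"
  | K "'x set" "('p, 'x, 'a) form"

fun FV :: "('p, 'x, 'a) form \<Rightarrow> 'x set" where
  "FV (Pred p x) = {x}"
| "FV Top = {}"
| "FV (Neg \<phi>) = FV \<phi>"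
| "FV (Conj \<phi> \<psi>) = FV \<phi> \<union> FV \<psi>"
| "FV (Assign x a \<phi>) = FV \<phi> - {x}"
| "FV (K X \<alpha>) = X"

fun wf_form :: "('p, 'x, 'a) form \<Rightarrow> bool" where
  "wf_form (Pred p x) = True"
| "wf_form Top = True"
| "wf_form (Neg \<phi>) = wf_form \<phi>"
| "wf_form (Conj \<phi> \<psi>) = (wf_form \<phi> \<and> wf_form \<psi>)"
| "wf_form (Assign x a \<phi>) = wf_form \<phi>"
| "wf_form (K X \<alpha>) = (finite X \<and> wf_form \<alpha> \<and> FV \<alpha> = {})"

definition sentence :: "('p, 'x, 'a) form \<Rightarrow> bool" where
  "sentence \<phi> \<longleftrightarrow> wf_form \<phi> \<and> FV \<phi> = {}"

datatype ('v, 'a, 'p) smodel =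
  SM (sV: "'v set") (sC: "'v set set") (chi: "'v \<Rightarrow> 'a") (lab: "'p \<Rightarrow> 'v set")

definition simplicial_model :: "('v, 'a, 'p) smodel \<Rightarrow> bool" where
  "simplicial_model S \<longleftrightarrow>
     sV S \<noteq> {} \<and>
     (\<forall>X\<in>sC S. X \<subseteq> sV S) \<and>
     {} \<notin> sC S \<and>
     (\<forall>X\<in>sC S. \<forall>Y. Y \<noteq> {} \<and> Y \<subseteq> X \<longrightarrow> Y \<in> sC S) \<and>
     (\<forall>v\<in>sV S. {v} \<in> sC S) \<and>
     (\<forall>X\<in>sC S. inj_on (chi S) X)"

definition facets :: "('v, 'a, 'p) smodel \<Rightarrow> 'v set set" where
  "facets S = {F \<in> sC S. \<forall>G\<in>sC S. F \<subseteq> G \<longrightarrow> G = F}"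

fun sat_sc :: "('v, 'a, 'p) smodel \<Rightarrow> 'v set \<Rightarrow> ('x \<Rightarrow> 'a) \<Rightarrow> ('p, 'x, 'a) form \<Rightarrow> bool" where
  "sat_sc S F \<sigma> (Pred p x) = (\<sigma> x \<in> chi S ` (F \<inter> lab S p))"
| "sat_sc S F \<sigma> Top = True"
| "sat_sc S F \<sigma> (Neg \<phi>) = (\<not> sat_sc S F \<sigma> \<phi>)"
| "sat_sc S F \<sigma> (Conj \<phi> \<psi>) = (sat_sc S F \<sigma> \<phi> \<and> sat_sc S F \<sigma> \<psi>)"
| "sat_sc S F \<sigma> (Assign x a \<phi>) = (a \<in> chi S ` F \<longrightarrow> sat_sc S F (\<sigma>(x := a)) \<phi>)"
| "sat_sc S F \<sigma> (K X \<alpha>) =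
     (\<forall>G\<in>facets S. \<sigma> ` X \<subseteq> chi S ` (F \<inter> G) \<longrightarrow> sat_sc S G \<sigma> \<alpha>)"

datatype ('w, 'a, 'p) kmodel =
  KM (kW: "'w set") (kdelta: "'w \<Rightarrow> 'a set") (kR: "'a \<Rightarrow> 'w rel") (krho: "'p \<Rightarrow> 'w \<Rightarrow> 'a set")

definition kripke_model :: "('w, 'a, 'p) kmodel \<Rightarrow> bool" where
  "kripke_model M \<longleftrightarrow>
     kW M \<noteq> {} \<and>
     (\<forall>w\<in>kW M. kdelta M w \<noteq> {}) \<and>
     (\<forall>a. kR M a \<subseteq> kW M \<times> kW M) \<and>
     (\<forall>a. \<forall>w\<in>kW M. a \<notin> kdelta M w \<longrightarrow> kR M a `` {w} = {}) \<and>
     (\<forall>p. \<forall>w\<in>kW M. krho M p w \<subseteq> kdelta M w)"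

text \<open>The intersection of R_a(w) over a in A, with the empty intersection being W.\<close>
definition isect :: "('w, 'a, 'p) kmodel \<Rightarrow> 'a set \<Rightarrow> 'w \<Rightarrow> 'w set" where
  "isect M A w = {v \<in> kW M. \<forall>a\<in>A. (w, v) \<in> kR M a}"

fun sat_k :: "('w, 'a, 'p) kmodel \<Rightarrow> 'w \<Rightarrow> ('x \<Rightarrow> 'a) \<Rightarrow> ('p, 'x, 'a) form \<Rightarrow> bool" where
  "sat_k M w \<sigma> (Pred p x) = (\<sigma> x \<in> krho M p w)"
| "sat_k M w \<sigma> Top = True"
| "sat_k M w \<sigma> (Neg \<phi>) = (\<not> sat_k M w \<sigma> \<phi>)"
| "sat_k M w \<sigma> (Conj \<phi> \<psi>) = (sat_k M w \<sigma> \<phi> \<and> sat_k M w \<sigma> \<psi>)"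
| "sat_k M w \<sigma> (Assign x a \<phi>) = (a \<in> kdelta M w \<longrightarrow> sat_k M w (\<sigma>(x := a)) \<phi>)"
| "sat_k M w \<sigma> (K X \<alpha>) = (\<forall>v\<in>isect M (\<sigma> ` X) w. sat_k M v \<sigma> \<alpha>)"

definition local_epistemic :: "('w, 'a, 'p) kmodel \<Rightarrow> bool" where
  "local_epistemic M \<longleftrightarrow>
     kripke_model M \<and>
     (\<forall>a. let D = {w \<in> kW M. a \<in> kdelta M w} in equiv D (kR M a \<inter> D \<times> D)) \<and>
     (\<forall>a w v. (w, v) \<in> kR M a \<and> a \<in> kdelta M w \<longrightarrow> a \<in> kdelta M v) \<and>
     (\<forall>a w v p. (w, v) \<in> kR M a \<and> a \<in> krho M p w \<longrightarrow> a \<in> krho M p v) \<and>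
     (\<forall>w\<in>kW M. \<forall>v\<in>isect M (kdelta M w) w. kdelta M v \<subseteq> kdelta M w)"

definition proper_local_epistemic :: "('w, 'a, 'p) kmodel \<Rightarrow> bool" where
  "proper_local_epistemic M \<longleftrightarrow>
     local_epistemic M \<and> (\<forall>w\<in>kW M. isect M (kdelta M w) w = {w})"

definition LEM :: "('v, 'a, 'p) smodel \<Rightarrow> ('v set, 'a, 'p) kmodel" where
  "LEM S = KM (facets S) (\<lambda>F. chi S ` F)
     (\<lambda>a. {(F, G). F \<in> facets S \<and> G \<in> facets S \<and> a \<in> chi S ` (F \<inter> G)})
     (\<lambda>p F. chi S ` (F \<inter> lab S p))"

definition Fw :: "('w, 'a, 'p) kmodel \<Rightarrow> 'w \<Rightarrow> ('a \<times> 'w set) set" where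
  "Fw M w = {(a, kR M a `` {w}) | a. a \<in> kdelta M w}"

definition SC :: "('w, 'a, 'p) kmodel \<Rightarrow> ('a \<times> 'w set, 'a, 'p) smodel" where
  "SC M = SM {(a, kR M a `` {w}) | w a. w \<in> kW M \<and> a \<in> kdelta M w}
     {X. X \<noteq> {} \<and> (\<exists>w\<in>kW M. X \<subseteq> Fw M w)}
     fst
     (\<lambda>p. {(a, kR M a `` {w}) | w a. w \<in> kW M \<and> a \<in> krho M p w})"

end

theory Submission
  imports Defs
begin

text \<open>
  Both translations are instances of one situation: a map f from the worlds of a Kripke model
  onto the facets of a simplicial model that matches the agents of a world with the colours of
  its facet, the atomic facts with the labels, and makes w and v a-indistinguishable exactly
  when f w and f v share the a-coloured vertex. Under such a map the truth clauses of the two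
  semantics coincide clause by clause, so satisfaction is preserved for all formulas and all
  assignments. For LEM the map is the identity on facets;
  for SC it is w \<mapsto> Fw M w, and the main work is to check that these sets are exactly the
  facets, which is where reflexivity, symmetry and transitivity of R_a and the locality condition
  on the intersection of the R_a(w) enter. Properness of LEM and the existence of facets rest on
  the injectivity of the colouring, which bounds the size of simplices by the number of agents.
\<close>

lemma image_Int_trans_inj_on:
  assumes "inj_on f B" "a \<in> f ` (A \<inter> B)" "a \<in> f ` (B \<inter> C)"
  shows "a \<in> f ` (A \<inter> C)"
  using assms by (auto dest: inj_onD)

definition facet_correspondence ::
    "('w, 'a, 'p) kmodel \<Rightarrow> ('v, 'a, 'p) smodel \<Rightarrow> ('w \<Rightarrow> 'v set) \<Rightarrow> bool" where
  "facet_correspondence M S f \<longleftrightarrow>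
     f ` kW M = facets S \<and>
     (\<forall>w\<in>kW M. kdelta M w = chi S ` f w \<and> (\<forall>p. krho M p w = chi S ` (f w \<inter> lab S p)) \<and>
        (\<forall>v\<in>kW M. \<forall>a. (w, v) \<in> kR M a \<longleftrightarrow> a \<in> chi S ` (f w \<inter> f v)))"

lemma sat_k_iff_sat_sc:
  assumes corr: "facet_correspondence M S f" and w: "w \<in> kW M"
  shows "sat_k M w \<sigma> \<alpha> \<longleftrightarrow> sat_sc S (f w) \<sigma> \<alpha>"
proof -
  have facets: "f ` kW M = facets S"
    and delta: "\<And>w. w \<in> kW M \<Longrightarrow> kdelta M w = chi S ` f w"
    and rho: "\<And>w p. w \<in> kW M \<Longrightarrow> krho M p w = chi S ` (f w \<inter> lab S p)"
    and R: "\<And>w v a. w \<in> kW M \<Longrightarrow> v \<in> kW M \<Longrightarrow> (w, v) \<in> kR M a \<longleftrightarrow> a \<in> chi S ` (f w \<inter> f v)"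
    using corr by (simp_all add: facet_correspondence_def)
  show ?thesis
    using w
  proof (induction \<alpha> arbitrary: w \<sigma>)
    case (K X \<alpha>)
    have "isect M (\<sigma> ` X) w = {v \<in> kW M. \<sigma> ` X \<subseteq> chi S ` (f w \<inter> f v)}"
      using R[OF K.prems] unfolding isect_def by blast
    then have "sat_k M w \<sigma> (K X \<alpha>) \<longleftrightarrow>
        (\<forall>v\<in>kW M. \<sigma> ` X \<subseteq> chi S ` (f w \<inter> f v) \<longrightarrow> sat_sc S (f v) \<sigma> \<alpha>)"
      using K.IH by auto
    also have "\<dots> \<longleftrightarrow> sat_sc S (f w) \<sigma> (K X \<alpha>)"
      unfolding sat_sc.simps facets[symmetric] Ball_image_comp by simp
    finally show ?case .
  qed (simp_all add: delta rho)
qed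

lemma simplex_finite_card_le:
  fixes S :: "('v, 'a::finite, 'p) smodel"
  assumes "simplicial_model S" "X \<in> sC S"
  shows "finite X" "card X \<le> card (UNIV :: 'a set)"
proof -
  have inj: "inj_on (chi S) X" using assms unfolding simplicial_model_def by blast
  show "finite X" using inj finite_imageD[of "chi S" X] by (simp add: finite_subset)
  show "card X \<le> card (UNIV :: 'a set)" using card_inj_on_le[OF inj, of UNIV] by simp
qed

lemma simplex_subset_facet:
  fixes S :: "('v, 'a::finite, 'p) smodel"
  assumes sm: "simplicial_model S" and X: "X \<in> sC S"
  obtains F where "F \<in> facets S" "X \<subseteq> F"
proof -
  let ?N = "card ` {Y \<in> sC S. X \<subseteq> Y}"
  have fin: "finite ?N"
    by (rule finite_subset[of _ "{..card (UNIV :: 'a set)}"]) (auto dest: simplex_finite_card_le[OF sm])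
  have "?N \<noteq> {}" using X by blast
  then obtain Y where Y: "Y \<in> sC S" "X \<subseteq> Y" "card Y = Max ?N"
    using Max_in[OF fin] by auto
  have "G = Y" if G: "G \<in> sC S" "Y \<subseteq> G" for G
  proof -
    have "card G \<le> card Y" using G Y Max_ge[OF fin, of "card G"] by auto
    then show "G = Y" using G card_seteq simplex_finite_card_le(1)[OF sm] by blast
  qed
  then have "Y \<in> facets S" using Y(1) unfolding facets_def by blast
  then show ?thesis using that Y(2) by blast
qed

lemma facet_simplex: "F \<in> facets S \<Longrightarrow> F \<in> sC S"
  unfolding facets_def by blast

lemma facet_nonempty: "simplicial_model S \<Longrightarrow> F \<in> facets S \<Longrightarrow> F \<noteq> {}"
  unfolding simplicial_model_def facets_def by blast

lemma inj_on_chi_facet: "simplicial_model S \<Longrightarrow> F \<in> facets S \<Longrightarrow> inj_on (chi S) F"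
  unfolding simplicial_model_def facets_def by blast

lemma facets_nonempty:
  fixes S :: "('v, 'a::finite, 'p) smodel"
  assumes "simplicial_model S"
  shows "facets S \<noteq> {}"
proof -
  obtain v where "{v} \<in> sC S" using assms unfolding simplicial_model_def by blast
  then show ?thesis using simplex_subset_facet[OF assms] by blast
qed

lemma facet_eq_if_colours_shared:
  assumes sm: "simplicial_model S" and F: "F \<in> facets S" and G: "G \<in> sC S"
    and shared: "chi S ` F \<subseteq> chi S ` (F \<inter> G)"
  shows "G = F"
proof -
  have "F \<subseteq> G"
  proof
    fix v assume "v \<in> F"
    then obtain u where "u \<in> F \<inter> G" "chi S u = chi S v" using shared by force
    with \<open>v \<in> F\<close> show "v \<in> G" using inj_on_chi_facet[OF sm F] by (auto dest: inj_onD)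
  qed
  then show ?thesis using F G unfolding facets_def by blast
qed

lemma local_epistemic_kripke_model: "local_epistemic M \<Longrightarrow> kripke_model M"
  unfolding local_epistemic_def by blast

lemma local_epistemicI:
  assumes "kripke_model M"
    and equiv: "\<And>a. equiv {w \<in> kW M. a \<in> kdelta M w} (kR M a)"
    and "\<And>a w v p. (w, v) \<in> kR M a \<Longrightarrow> a \<in> krho M p w \<Longrightarrow> a \<in> krho M p v"
    and "\<And>w v. w \<in> kW M \<Longrightarrow> v \<in> isect M (kdelta M w) w \<Longrightarrow> kdelta M v \<subseteq> kdelta M w"
  shows "local_epistemic M"
proof -
  have "kR M a \<subseteq> {w \<in> kW M. a \<in> kdelta M w} \<times> {w \<in> kW M. a \<in> kdelta M w}" for a
    using equiv_type[OF equiv] .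
  then show ?thesis
    using assms unfolding local_epistemic_def Let_def by (auto simp: Int_absorb2)
qed

lemma local_epistemic_equiv:
  assumes "local_epistemic M"
  shows "equiv {w \<in> kW M. a \<in> kdelta M w} (kR M a)"
proof -
  let ?D = "{w \<in> kW M. a \<in> kdelta M w}"
  have "kR M a \<subseteq> ?D \<times> ?D"
  proof (rule subrelI)
    fix w v assume "(w, v) \<in> kR M a"
    then show "(w, v) \<in> ?D \<times> ?D"
      using assms unfolding local_epistemic_def kripke_model_def by blast
  qed
  moreover have "equiv ?D (kR M a \<inter> ?D \<times> ?D)"
    using assms unfolding local_epistemic_def Let_def by blast
  ultimately show ?thesis by (simp add: Int_absorb2)
qed

lemma kR_iff_same_class:
  assumes "local_epistemic M" "w \<in> kW M" "v \<in> kW M"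
  shows "(w, v) \<in> kR M a \<longleftrightarrow>
    a \<in> kdelta M w \<and> a \<in> kdelta M v \<and> kR M a `` {w} = kR M a `` {v}"
  using equiv_class_eq_iff[OF local_epistemic_equiv[OF assms(1)]] assms(2,3) by blast

lemma kripke_model_LEM:
  fixes S :: "('v, 'a::finite, 'p) smodel"
  assumes "simplicial_model S"
  shows "kripke_model (LEM S)"
  using facets_nonempty[OF assms] facet_nonempty[OF assms]
  unfolding kripke_model_def LEM_def by auto

lemma equiv_kR_LEM:
  assumes sm: "simplicial_model S"
  shows "equiv {F \<in> kW (LEM S). a \<in> kdelta (LEM S) F} (kR (LEM S) a)"
proof (rule equivI)
  show "trans (kR (LEM S) a)"
    by (rule transI)
      (auto simp: LEM_def intro: image_Int_trans_inj_on[OF inj_on_chi_facet[OF sm]])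
qed (auto simp: LEM_def refl_on_def sym_def Int_commute)

lemma isect_LEM:
  assumes sm: "simplicial_model S" and F: "F \<in> facets S"
  shows "isect (LEM S) (kdelta (LEM S) F) F = {F}"
proof -
  have "G = F" if "G \<in> isect (LEM S) (kdelta (LEM S) F) F" for G
    using that facet_eq_if_colours_shared[OF sm F facet_simplex]
    by (auto simp: LEM_def isect_def)
  then show ?thesis using F by (auto simp: LEM_def isect_def)
qed

lemma proper_local_epistemic_LEM:
  fixes S :: "('v, 'a::finite, 'p) smodel"
  assumes sm: "simplicial_model S"
  shows "proper_local_epistemic (LEM S)"
proof -
  have "a \<in> krho (LEM S) p G" if "(F, G) \<in> kR (LEM S) a" "a \<in> krho (LEM S) p F" for a F G p
    using that image_Int_trans_inj_on[OF inj_on_chi_facet[OF sm], where A = G and C = "lab S p"]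
    by (auto simp: LEM_def Int_commute)
  moreover have "kdelta (LEM S) G \<subseteq> kdelta (LEM S) F"
    if "F \<in> kW (LEM S)" "G \<in> isect (LEM S) (kdelta (LEM S) F) F" for F G
    using that isect_LEM[OF sm] by (simp add: LEM_def)
  ultimately have "local_epistemic (LEM S)"
    using kripke_model_LEM[OF sm] equiv_kR_LEM[OF sm] by (intro local_epistemicI)
  then show ?thesis
    using isect_LEM[OF sm] unfolding proper_local_epistemic_def by (simp add: LEM_def)
qed

lemma facet_correspondence_LEM: "facet_correspondence (LEM S) S id"
  unfolding facet_correspondence_def LEM_def by auto

lemma sV_SC: "sV (SC M) = (\<Union>w\<in>kW M. Fw M w)"
  unfolding SC_def Fw_def by auto

lemma sC_SC: "sC (SC M) = {X. X \<noteq> {} \<and> (\<exists>w\<in>kW M. X \<subseteq> Fw M w)}"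
  by (simp add: SC_def)

lemma chi_SC: "chi (SC M) = fst"
  by (simp add: SC_def)

lemma lab_SC: "lab (SC M) p = {(a, kR M a `` {w}) | w a. w \<in> kW M \<and> a \<in> krho M p w}"
  by (simp add: SC_def)

lemma fst_Fw: "fst ` Fw M w = kdelta M w"
  unfolding Fw_def by force

lemma inj_on_fst_Fw: "inj_on fst (Fw M w)"
  unfolding Fw_def inj_on_def by auto

lemma Fw_nonempty: "kripke_model M \<Longrightarrow> w \<in> kW M \<Longrightarrow> Fw M w \<noteq> {}"
  using fst_Fw[of M w] unfolding kripke_model_def by auto

lemma fst_Fw_Int:
  assumes "local_epistemic M" "w \<in> kW M" "v \<in> kW M"
  shows "fst ` (Fw M w \<inter> Fw M v) = {a. (w, v) \<in> kR M a}"
  using kR_iff_same_class[OF assms] unfolding Fw_def by force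

lemma Fw_subset_imp_eq:
  assumes le: "local_epistemic M" and w: "w \<in> kW M" and u: "u \<in> kW M"
    and sub: "Fw M w \<subseteq> Fw M u"
  shows "Fw M u = Fw M w"
proof -
  have "kdelta M w = fst ` (Fw M w \<inter> Fw M u)"
    using sub fst_Fw by (metis Int_absorb2)
  then have wu: "(w, u) \<in> kR M a" if "a \<in> kdelta M w" for a
    using that fst_Fw_Int[OF le w u] by blast
  then have "u \<in> isect M (kdelta M w) w"
    using u unfolding isect_def by blast
  then have "kdelta M u \<subseteq> kdelta M w"
    using le w unfolding local_epistemic_def by blast
  then have "Fw M u \<subseteq> Fw M w"
    using wu kR_iff_same_class[OF le w u] unfolding Fw_def by fastforce
  then show ?thesis using sub by blast
qed

lemma simplicial_model_SC:
  assumes "kripke_model M"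
  shows "simplicial_model (SC M)"
proof -
  obtain w where "w \<in> kW M" using assms unfolding kripke_model_def by blast
  then have "\<exists>w\<in>kW M. Fw M w \<noteq> {}" using Fw_nonempty[OF assms] by blast
  then show ?thesis
    unfolding simplicial_model_def sV_SC sC_SC chi_SC
    by (intro conjI; blast intro: inj_on_subset[OF inj_on_fst_Fw] dest: subset_trans)
qed

lemma facets_SC:
  assumes le: "local_epistemic M"
  shows "facets (SC M) = Fw M ` kW M"
proof -
  have Fw_simplex: "Fw M w \<in> sC (SC M)" if "w \<in> kW M" for w
    using Fw_nonempty[OF local_epistemic_kripke_model[OF le] that] that unfolding sC_SC by blast
  show ?thesis
    unfolding facets_def
    using Fw_simplex Fw_subset_imp_eq[OF le] unfolding sC_SC by blast
qed

lemma fst_Fw_Int_lab_SC: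
  assumes le: "local_epistemic M" and w: "w \<in> kW M"
  shows "fst ` (Fw M w \<inter> lab (SC M) p) = krho M p w"
proof -
  have km: "kripke_model M" using local_epistemic_kripke_model[OF le] .
  have "a \<in> krho M p w"
    if "a \<in> kdelta M w" "u \<in> kW M" "a \<in> krho M p u" "kR M a `` {w} = kR M a `` {u}" for a u
  proof -
    have "(u, w) \<in> kR M a"
      using that km kR_iff_same_class[OF le that(2) w] unfolding kripke_model_def by blast
    then show ?thesis using le that(3) unfolding local_epistemic_def by blast
  qed
  moreover have "krho M p w \<subseteq> kdelta M w"
    using km w unfolding kripke_model_def by blast
  ultimately show ?thesis
    using w unfolding Fw_def lab_SC by force
qed

lemma facet_correspondence_SC:
  assumes le: "local_epistemic M"
  shows "facet_correspondence M (SC M) (Fw M)"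
  unfolding facet_correspondence_def chi_SC
  by (simp add: facets_SC[OF le] fst_Fw fst_Fw_Int_lab_SC[OF le] fst_Fw_Int[OF le])

theorem proposition2:
  fixes S :: "('v, 'a::finite, 'p::countable) smodel"
    and M :: "('w, 'a, 'p) kmodel"
  shows
   "(simplicial_model S \<longrightarrow>
       proper_local_epistemic (LEM S) \<and>
       (\<forall>F\<in>facets S. \<forall>\<alpha> :: ('p, 'x::countable, 'a) form. sentence \<alpha> \<longrightarrow>
          (\<forall>\<sigma>. sat_sc S F \<sigma> \<alpha> \<longleftrightarrow> sat_k (LEM S) F \<sigma> \<alpha>))) \<and>
    (local_epistemic M \<longrightarrow>
       simplicial_model (SC M) \<and>
       facets (SC M) = {Fw M w | w. w \<in> kW M} \<and>
       (\<forall>w\<in>kW M. \<forall>\<alpha> :: ('p, 'x, 'a) form. sentence \<alpha> \<longrightarrow>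
          (\<forall>\<sigma>. sat_k M w \<sigma> \<alpha> \<longleftrightarrow> sat_sc (SC M) (Fw M w) \<sigma> \<alpha>)))"
proof (intro conjI impI ballI allI)
  assume "simplicial_model S"
  then show "proper_local_epistemic (LEM S)" by (rule proper_local_epistemic_LEM)
next
  fix F and \<alpha> :: "('p, 'x, 'a) form" and \<sigma>
  assume "F \<in> facets S"
  then have "F \<in> kW (LEM S)" by (simp add: LEM_def)
  then show "sat_sc S F \<sigma> \<alpha> \<longleftrightarrow> sat_k (LEM S) F \<sigma> \<alpha>"
    using sat_k_iff_sat_sc[OF facet_correspondence_LEM, of F S \<sigma> \<alpha>] by simp
next
  assume "local_epistemic M"
  then show "simplicial_model (SC M)"
    by (intro simplicial_model_SC local_epistemic_kripke_model)
next
  assume "local_epistemic M"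
  then show "facets (SC M) = {Fw M w | w. w \<in> kW M}"
    by (auto simp: facets_SC)
next
  fix w and \<alpha> :: "('p, 'x, 'a) form" and \<sigma>
  assume "local_epistemic M" "w \<in> kW M"
  then show "sat_k M w \<sigma> \<alpha> \<longleftrightarrow> sat_sc (SC M) (Fw M w) \<sigma> \<alpha>"
    by (intro sat_k_iff_sat_sc facet_correspondence_SC)
qed

end
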